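(* Assume the sponge $F\subset[0,1]^d$ satisfies the SPPC. Then for all $\mathbf i\in\Sigma$ and $r>0$, $\pi(B_{\mathbf i}(r))\subseteq B(\pi(\mathbf i),\sqrt d\,r)$. Moreover, if $F$ satisfies the very strong SPPC and $\delta_0>0$ is a constant such that for every $\sigma\in\mathcal A$, $1\le n\le d$ and $i,j\in\mathcal I$ for which $f_i,f_j$ do not overlap exactly on $E_n^\sigma$ one has $\mathrm{dist}\big(\Pi_n^\sigma(f_i([0,1]^d)),\Pi_n^\sigma(f_j([0,1]^d))\big)\ge\delta_0$, then for all $\mathbf i\in\Sigma$ and $r>0$, $B(\pi(\mathbf i),\delta_0r)\cap F\subseteq\pi(B_{\mathbf i}(r))$.
   Context: Setting: $\mathcal I=\{1,\dots,N\}$, $f_i(x)=A_ix+t_i$ on $\mathbb R^d$ with $A_i=\mathrm{diag}(\lambda_i^{(1)},\dots,\lambda_i^{(d)})$, all $\lambda_i^{(n)}\in(0,1)$, $f_i([0,1]^d)\subset[0,1]^d$, no two maps agree on $[0,1]^d$, and for all $m\ne n$ some $i$ has $\lambda_i^{(n)}\ne\lambda_i^{(m)}$; $F$ is the attractor. $\Sigma=\mathcal I^{\mathbb N}$, $\pi(\mathbf i)=\lim_kf_{i_1}\circ\cdots\circ f_{i_k}(0)$; $B(x,\rho)$ is the Euclidean ball. For $\mathbf i\in\Sigma$, $r>0$, $L_{\mathbf i}(r,n)$ is the unique integer with $\prod_{\ell=1}^{L_{\mathbf i}(r,n)}\lambda_{i_\ell}^{(n)}\le r<\prod_{\ell=1}^{L_{\mathbf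 i}(r,n)-1}\lambda_{i_\ell}^{(n)}$. $\mathbf i$ determines a $\sigma$-ordered cube at scale $r$ if $L_{\mathbf i}(r,\sigma_d)\le\dots\le L_{\mathbf i}(r,\sigma_1)$, ties resolved by: if coordinates $k<m$ have $L_{\mathbf i}(r,k)=L_{\mathbf i}(r,m)$ then $k$ precedes $m$ iff $\prod_{\ell=1}^{L_{\mathbf i}(r,k)}\lambda_{i_\ell}^{(k)}\ge\prod_{\ell=1}^{L_{\mathbf i}(r,k)}\lambda_{i_\ell}^{(m)}$; write $\sigma_{\mathbf i}(r)$ for it, and $\mathcal A$ for the set of all orderings so arising. $E_n^\sigma$: span of coordinate axes $\sigma_1,\dots,\sigma_n$, $\Pi_n^\sigma$ the orthogonal projection onto it; $f_i,f_j$ overlap exactly on $E_n^\sigma$ if $\Pi_n^\sigma f_i=\Pi_n^\sigma f_j$ on $[0,1]^d$. SPPC: for all $\sigma\in\mathcal A$, $1\le n\le d$, $i,j$, either $f_i,f_j$ overlap exactly on $E_n^\sigma$ or $\Pi_n^\sigma(f_i((0,1)^d))\cap\Pi_n^\sigma(f_j((0,1)^d))=\emptyset$; very strong SPPC: the same with $[0,1]^d$ in place of $(0,1)^d$. For $1\le n\le d-1$, $\mathcal I_n^\sigma$ is the set of $j$ such that no $i<j$ overlaps exactly with $j$ on $E_n^\sigma$; $\mathcal I_d^\sigma=\mathcal I$; $\Pi_n^\sigma j$ (on indices) is the unique element of $\mathcal I_n^\sigma$ overlapping exactly with $j$ on $E_n^\sigma$, extended to $\Sigma$ coordinatewise. $B_{\mathbf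 i}(r)=\{\mathbf j\in\Sigma:|\Pi_n^\sigma\mathbf j\wedge\Pi_n^\sigma\mathbf i|\ge L_{\mathbf i}(r,\sigma_n)\ \forall n\}$ with $\sigma=\sigma_{\mathbf i}(r)$ and $\wedge$ the longest common prefix. *)

theory Defs
  imports "HOL-Analysis.Analysis"
begin

text \<open>Coordinates of R^d are indexed by a finite linearly
ordered type 'd (d = CARD('d)); maps are indexed by I = {1..N}.
lam i k is the k-th diagonal entry of A_i, t i the translation of f_i.\<close>

definition fmap :: "(nat \<Rightarrow> 'd::{finite,linorder} \<Rightarrow> real) \<Rightarrow> (nat \<Rightarrow> (real, 'd) vec) \<Rightarrow> nat \<Rightarrow> (real, 'd) vec \<Rightarrow> (real, 'd) vec" where
  "fmap lam t i x = (\<chi> k. lam i k * x $ k + t i $ k)"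

definition Idx :: "nat \<Rightarrow> nat set" where
  "Idx N = {1..N}"

text \<open>Symbol space: sequences; position 0 holds i_1.\<close>
definition SymSp :: "nat \<Rightarrow> (nat \<Rightarrow> nat) set" where
  "SymSp N = {w. \<forall>l. w l \<in> Idx N}"

definition coding :: "(nat \<Rightarrow> 'd::{finite,linorder} \<Rightarrow> real) \<Rightarrow> (nat \<Rightarrow> (real, 'd) vec) \<Rightarrow> (nat \<Rightarrow> nat) \<Rightarrow> (real, 'd) vec" where
  "coding lam t w = lim (\<lambda>K. foldr (fmap lam t) (map w [0..<K]) 0)"

text \<open>L_w(r,k): least L with prod_{l=1}^L lam_{w_l}^{(k)} <= r (for r<1 this is the unique
integer of the paper).\<close>
definition Lfun :: "(nat \<Rightarrow> 'd::{finite,linorder} \<Rightarrow> real) \<Rightarrow> (nat \<Rightarrow> nat) \<Rightarrow> real \<Rightarrow> 'd \<Rightarrow> nat" where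
  "Lfun lam w r k = (LEAST L. (\<Prod>l<L. lam (w l) k) \<le> r)"

definition prec :: "(nat \<Rightarrow> 'd::{finite,linorder} \<Rightarrow> real) \<Rightarrow> (nat \<Rightarrow> nat) \<Rightarrow> real \<Rightarrow> 'd \<Rightarrow> 'd \<Rightarrow> bool" where
  "prec lam w r k m =
     (Lfun lam w r m < Lfun lam w r k \<or>
      (Lfun lam w r k = Lfun lam w r m \<and> k \<noteq> m \<and>
        (if k < m then (\<Prod>l<Lfun lam w r k. lam (w l) m) \<le> (\<Prod>l<Lfun lam w r k. lam (w l) k)
         else (\<Prod>l<Lfun lam w r k. lam (w l) m) < (\<Prod>l<Lfun lam w r k. lam (w l) k))))"

definition sigma_ordered :: "(nat \<Rightarrow> 'd::{finite,linorder} \<Rightarrow> real) \<Rightarrow> (nat \<Rightarrow> nat) \<Rightarrow> real \<Rightarrow> 'd list \<Rightarrow> bool" where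
  "sigma_ordered lam w r \<sigma> = (distinct \<sigma> \<and> set \<sigma> = UNIV \<and> sorted_wrt (prec lam w r) \<sigma>)"

definition sigma_of :: "(nat \<Rightarrow> 'd::{finite,linorder} \<Rightarrow> real) \<Rightarrow> (nat \<Rightarrow> nat) \<Rightarrow> real \<Rightarrow> 'd list" where
  "sigma_of lam w r = (THE \<sigma>. sigma_ordered lam w r \<sigma>)"

definition Acal :: "(nat \<Rightarrow> 'd::{finite,linorder} \<Rightarrow> real) \<Rightarrow> nat \<Rightarrow> 'd list set" where
  "Acal lam N = {sigma_of lam w r | w r. w \<in> SymSp N \<and> r > 0}"

text \<open>Orthogonal projection onto E_n^sigma = span of axes sigma_1..sigma_n.\<close>
definition Proj :: "'d::{finite,linorder} list \<Rightarrow> nat \<Rightarrow> (real, 'd) vec \<Rightarrow> (real, 'd) vec" where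
  "Proj \<sigma> n x = (\<chi> k. if k \<in> set (take n \<sigma>) then x $ k else 0)"

definition overlap_exactly :: "(nat \<Rightarrow> 'd::{finite,linorder} \<Rightarrow> real) \<Rightarrow> (nat \<Rightarrow> (real, 'd) vec) \<Rightarrow> 'd list \<Rightarrow> nat \<Rightarrow> nat \<Rightarrow> nat \<Rightarrow> bool" where
  "overlap_exactly lam t \<sigma> n i j =
     (\<forall>x\<in>cbox 0 One. Proj \<sigma> n (fmap lam t i x) = Proj \<sigma> n (fmap lam t j x))"

definition SPPC :: "(nat \<Rightarrow> 'd::{finite,linorder} \<Rightarrow> real) \<Rightarrow> (nat \<Rightarrow> (real, 'd) vec) \<Rightarrow> nat \<Rightarrow> bool" where
  "SPPC lam t N = (\<forall>\<sigma>\<in>Acal lam N. \<forall>n\<in>{1..CARD('d)}. \<forall>i\<in>Idx N. \<forall>j\<in>Idx N.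
      overlap_exactly lam t \<sigma> n i j \<or>
      (Proj \<sigma> n ` fmap lam t i ` box 0 One) \<inter> (Proj \<sigma> n ` fmap lam t j ` box 0 One) = {})"

definition very_strong_SPPC :: "(nat \<Rightarrow> 'd::{finite,linorder} \<Rightarrow> real) \<Rightarrow> (nat \<Rightarrow> (real, 'd) vec) \<Rightarrow> nat \<Rightarrow> bool" where
  "very_strong_SPPC lam t N = (\<forall>\<sigma>\<in>Acal lam N. \<forall>n\<in>{1..CARD('d)}. \<forall>i\<in>Idx N. \<forall>j\<in>Idx N.
      overlap_exactly lam t \<sigma> n i j \<or>
      (Proj \<sigma> n ` fmap lam t i ` cbox 0 One) \<inter> (Proj \<sigma> n ` fmap lam t j ` cbox 0 One) = {})"

definition Iset :: "(nat \<Rightarrow> 'd::{finite,linorder} \<Rightarrow> real) \<Rightarrow> (nat \<Rightarrow> (real, 'd) vec) \<Rightarrow> nat \<Rightarrow> 'd list \<Rightarrow> nat \<Rightarrow> nat set" where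
  "Iset lam t N \<sigma> n =
     (if n < CARD('d) then {j \<in> Idx N. \<not> (\<exists>i\<in>Idx N. i < j \<and> overlap_exactly lam t \<sigma> n i j)}
      else Idx N)"

definition proj_idx :: "(nat \<Rightarrow> 'd::{finite,linorder} \<Rightarrow> real) \<Rightarrow> (nat \<Rightarrow> (real, 'd) vec) \<Rightarrow> nat \<Rightarrow> 'd list \<Rightarrow> nat \<Rightarrow> nat \<Rightarrow> nat" where
  "proj_idx lam t N \<sigma> n j = (THE i. i \<in> Iset lam t N \<sigma> n \<and> overlap_exactly lam t \<sigma> n i j)"

definition proj_seq :: "(nat \<Rightarrow> 'd::{finite,linorder} \<Rightarrow> real) \<Rightarrow> (nat \<Rightarrow> (real, 'd) vec) \<Rightarrow> nat \<Rightarrow> 'd list \<Rightarrow> nat \<Rightarrow> (nat \<Rightarrow> nat) \<Rightarrow> (nat \<Rightarrow> nat)" where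
  "proj_seq lam t N \<sigma> n w = (\<lambda>l. proj_idx lam t N \<sigma> n (w l))"

definition common_prefix_ge :: "(nat \<Rightarrow> nat) \<Rightarrow> (nat \<Rightarrow> nat) \<Rightarrow> nat \<Rightarrow> bool" where
  "common_prefix_ge a b L = (\<forall>l<L. a l = b l)"

definition Bset :: "(nat \<Rightarrow> 'd::{finite,linorder} \<Rightarrow> real) \<Rightarrow> (nat \<Rightarrow> (real, 'd) vec) \<Rightarrow> nat \<Rightarrow> (nat \<Rightarrow> nat) \<Rightarrow> real \<Rightarrow> (nat \<Rightarrow> nat) set" where
  "Bset lam t N w r =
     (let \<sigma> = sigma_of lam w r in
      {v \<in> SymSp N. \<forall>n\<in>{1..CARD('d)}.
         common_prefix_ge (proj_seq lam t N \<sigma> n v) (proj_seq lam t N \<sigma> n w)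
                          (Lfun lam w r (\<sigma> ! (n - 1)))})"

definition sponge :: "(nat \<Rightarrow> 'd::{finite,linorder} \<Rightarrow> real) \<Rightarrow> (nat \<Rightarrow> (real, 'd) vec) \<Rightarrow> nat \<Rightarrow> ((real, 'd) vec) set \<Rightarrow> bool" where
  "sponge lam t N F =
     ((\<forall>i\<in>Idx N. \<forall>k. 0 < lam i k \<and> lam i k < 1) \<and>
      (\<forall>i\<in>Idx N. fmap lam t i ` cbox 0 One \<subseteq> cbox 0 One) \<and>
      (\<forall>i\<in>Idx N. \<forall>j\<in>Idx N. i \<noteq> j \<longrightarrow> (\<exists>x\<in>cbox 0 One. fmap lam t i x \<noteq> fmap lam t j x)) \<and>
      (\<forall>m n. m \<noteq> n \<longrightarrow> (\<exists>i\<in>Idx N. lam i n \<noteq> lam i m)) \<and>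
      F \<noteq> {} \<and> compact F \<and> F = (\<Union>i\<in>Idx N. fmap lam t i ` F))"

end

theory Submission
  imports Defs "HOL-Library.Omega_Words_Fun"
begin

text \<open>
  Coordinate k of the coding map pi is the series sum_j (prod_{l<j} lam_{w_l}^(k)) t_{w_j}^(k),
  whose first L terms involve only the k-th entries of the first L maps. So if the first L
  symbols of two codes overlap exactly on a coordinate plane containing axis k, their images
  differ in coordinate k by the factor prod_{l<L} lam_{w_l}^(k) times the difference of two
  points of the unit cube. For L = L_w(r,k) this factor is at most r, which gives the first
  inclusion coordinatewise. Conversely, if pi(v) is within delta_0 r of pi(w) but v is not in
  B_w(r), take the first position l below L_w(r,sigma_n) at which v_l and w_l do not overlap
  exactly on E_n^sigma. The projections of the tails at l lie in delta_0-separated sets, while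
  the factors of all coordinates in E_n^sigma still exceed r at l, so |pi(v) - pi(w)| > delta_0 r.
\<close>

lemma mem_unit_cube_cart: "(x :: real ^ 'n) \<in> cbox 0 One \<longleftrightarrow> (\<forall>i. 0 \<le> x $ i \<and> x $ i \<le> 1)"
  by (simp add: mem_box_cart Cart_1 [symmetric])

lemma norm_le_sqrt_card_cart:
  fixes x :: "real ^ 'n"
  assumes "\<And>k. \<bar>x $ k\<bar> \<le> r"
  shows "norm x \<le> sqrt (real CARD('n)) * r"
proof -
  have "0 \<le> r"
    using assms [of undefined] by linarith
  then have "norm x \<le> norm (\<chi> k::'n. r)"
    using assms by (intro norm_le_componentwise_cart) auto
  also have "\<dots> = sqrt (real CARD('n)) * r"
    using \<open>0 \<le> r\<close> by (simp add: norm_vec_def L2_set_def real_sqrt_mult power2_eq_square)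
  finally show ?thesis .
qed

lemma scaled_norm_le_componentwise_cart:
  fixes x y :: "real ^ 'n"
  assumes "\<And>k. c * \<bar>y $ k\<bar> \<le> \<bar>x $ k\<bar>" and "0 \<le> c"
  shows "c * norm y \<le> norm x"
proof -
  have "norm (c *\<^sub>R y) \<le> norm x"
    using assms by (intro norm_le_componentwise_cart) (simp add: abs_mult)
  then show ?thesis
    using assms(2) by simp
qed

lemma fmap_nth [simp]: "fmap lam t i x $ k = lam i k * x $ k + t i $ k"
  by (simp add: fmap_def)

lemma foldr_fmap_nth:
  "foldr (fmap lam t) (map w [0..<K]) x $ k =
     (\<Sum>j<K. (\<Prod>l<j. lam (w l) k) * t (w j) $ k) + (\<Prod>l<K. lam (w l) k) * x $ k"
  by (induction K arbitrary: x) (simp_all add: algebra_simps)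

lemma SymSp_nth: "w \<in> SymSp N \<Longrightarrow> w l \<in> Idx N"
  by (simp add: SymSp_def)

lemma suffix_in_SymSp: "w \<in> SymSp N \<Longrightarrow> suffix l w \<in> SymSp N"
  by (simp add: SymSp_def)

lemma prod_lessThan_add:
  fixes l j :: nat
  shows "(\<Prod>i<l + j. f i) = (\<Prod>i<l. f i) * (\<Prod>i<j. f (l + i))"
  by (induction j) (simp_all add: ac_simps)

lemma less_Lfun_imp_less_prod: "j < Lfun lam w r k \<Longrightarrow> r < (\<Prod>l<j. lam (w l) k)"
  unfolding Lfun_def using not_less_Least by force

lemma prod_Lfun_le: "(\<Prod>l<L. lam (w l) k) \<le> r \<Longrightarrow> (\<Prod>l<Lfun lam w r k. lam (w l) k) \<le> r"
  unfolding Lfun_def by (rule LeastI)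

lemma self_similar_backward_orbit:
  assumes "x \<in> F" and "F \<subseteq> (\<Union>i\<in>Idx N. fmap lam t i ` F)"
  obtains v xs where "v \<in> SymSp N" and "\<And>K. xs K \<in> F"
    and "\<And>K. foldr (fmap lam t) (map v [0..<K]) (xs K) = x"
proof -
  have "\<forall>y\<in>F. \<exists>i z. i \<in> Idx N \<and> z \<in> F \<and> y = fmap lam t i z"
    using assms(2) by blast
  then obtain idx pre where idx: "\<And>y. y \<in> F \<Longrightarrow> idx y \<in> Idx N"
    and pre: "\<And>y. y \<in> F \<Longrightarrow> pre y \<in> F"
    and pre_eq: "\<And>y. y \<in> F \<Longrightarrow> fmap lam t (idx y) (pre y) = y"
    by metis
  define xs where "xs K = (pre ^^ K) x" for K
  have xs_in_F: "xs K \<in> F" for K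
    by (induction K) (simp_all add: xs_def assms(1) pre)
  have "foldr (fmap lam t) (map (idx \<circ> xs) [0..<K]) (xs K) = x" for K
  proof (induction K)
    case (Suc K)
    have "fmap lam t (idx (xs K)) (xs (Suc K)) = xs K"
      using pre_eq [OF xs_in_F [of K]] by (simp add: xs_def)
    then show ?case
      using Suc by simp
  qed (simp add: xs_def)
  moreover have "idx \<circ> xs \<in> SymSp N"
    using idx xs_in_F by (simp add: SymSp_def)
  ultimately show ?thesis
    using that xs_in_F by blast
qed

lemma ex1_sorted_enumeration:
  fixes less :: "'a::finite \<Rightarrow> 'a \<Rightarrow> bool"
  assumes "class.linorder (\<lambda>a b. less a b \<or> a = b) less"
  shows "\<exists>!\<sigma>. distinct \<sigma> \<and> set \<sigma> = UNIV \<and> sorted_wrt less \<sigma>"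
  using linorder.ex1_sorted_list_for_set_if_finite [OF assms, of UNIV]
    linorder.strict_sorted_iff [OF assms]
  by auto

text \<open>\<open>prec lam w r\<close> compares the keys \<open>(L(r,k), \<Prod>l<L(r,k). lam (w l) k, k)\<close>
  lexicographically, descending in the first two components and ascending in the last.\<close>

lemma class_linorder_prec: "class.linorder (\<lambda>a b. prec lam w r a b \<or> a = b) (prec lam w r)"
  by unfold_locales (auto simp: prec_def split: if_splits)

lemma sigma_ordered_sigma_of: "sigma_ordered lam w r (sigma_of lam w r)"
  unfolding sigma_of_def sigma_ordered_def
  by (rule theI' [OF ex1_sorted_enumeration [OF class_linorder_prec]])

lemma distinct_sigma_of: "distinct (sigma_of lam w r)"
  and set_sigma_of: "set (sigma_of lam w r) = UNIV"
  using sigma_ordered_sigma_of unfolding sigma_ordered_def by auto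

lemma length_sigma_of:
  fixes lam :: "nat \<Rightarrow> 'd::{finite,linorder} \<Rightarrow> real"
  shows "length (sigma_of lam w r) = CARD('d)"
  using distinct_card [OF distinct_sigma_of [of lam w r]] set_sigma_of [of lam w r] by simp

lemma Lfun_sigma_of_le_if_mem_take:
  fixes lam :: "nat \<Rightarrow> 'd::{finite,linorder} \<Rightarrow> real"
  assumes "k \<in> set (take n (sigma_of lam w r))" and "n \<le> CARD('d)"
  shows "Lfun lam w r (sigma_of lam w r ! (n - 1)) \<le> Lfun lam w r k"
proof -
  let ?\<sigma> = "sigma_of lam w r"
  obtain p where p: "p < n" "?\<sigma> ! p = k"
    using assms(1) by (auto simp: in_set_conv_nth)
  show ?thesis
  proof (cases "p = n - 1")
    case False
    have "sorted_wrt (prec lam w r) ?\<sigma>"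
      using sigma_ordered_sigma_of [of lam w r] by (simp add: sigma_ordered_def)
    then have "prec lam w r (?\<sigma> ! p) (?\<sigma> ! (n - 1))"
      by (rule sorted_wrt_nth_less) (use p False assms(2) in \<open>auto simp: length_sigma_of\<close>)
    then show ?thesis
      using p by (auto simp: prec_def)
  qed (use p in simp)
qed

lemma overlap_exactly_refl [simp]: "overlap_exactly lam t \<sigma> n i i"
  and overlap_exactly_sym: "overlap_exactly lam t \<sigma> n i j \<Longrightarrow> overlap_exactly lam t \<sigma> n j i"
  and overlap_exactly_trans:
    "overlap_exactly lam t \<sigma> n i j \<Longrightarrow> overlap_exactly lam t \<sigma> n j k \<Longrightarrow> overlap_exactly lam t \<sigma> n i k"
  unfolding overlap_exactly_def by simp_all

lemma overlap_exactly_nth: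
  assumes "overlap_exactly lam t \<sigma> n i j" and "k \<in> set (take n \<sigma>)"
  shows "lam i k = lam j k \<and> t i $ k = t j $ k"
proof -
  have "Proj \<sigma> n (fmap lam t i x) $ k = Proj \<sigma> n (fmap lam t j x) $ k" if "x \<in> cbox 0 One" for x
    using assms(1) that unfolding overlap_exactly_def by simp
  then have "lam i k * x $ k + t i $ k = lam j k * x $ k + t j $ k" if "x \<in> cbox 0 One" for x
    using assms(2) that by (simp add: Proj_def)
  from this [of 0] this [of 1] show ?thesis
    by (simp add: mem_unit_cube_cart)
qed

lemma proj_idx_eq_if_overlap:
  "overlap_exactly lam t \<sigma> n i j \<Longrightarrow> proj_idx lam t N \<sigma> n i = proj_idx lam t N \<sigma> n j"
proof -
  assume ij: "overlap_exactly lam t \<sigma> n i j"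
  have "(\<lambda>x. x \<in> Iset lam t N \<sigma> n \<and> overlap_exactly lam t \<sigma> n x i) =
        (\<lambda>x. x \<in> Iset lam t N \<sigma> n \<and> overlap_exactly lam t \<sigma> n x j)"
    using ij by (intro ext) (meson overlap_exactly_sym overlap_exactly_trans)
  then show ?thesis
    unfolding proj_idx_def by simp
qed

lemma ex1_least_related:
  fixes R :: "nat \<Rightarrow> nat \<Rightarrow> bool"
  assumes "j \<in> S" and "equivp R"
  shows "\<exists>!i. i \<in> {j \<in> S. \<not> (\<exists>i\<in>S. i < j \<and> R i j)} \<and> R i j"
proof
  let ?P = "\<lambda>i. i \<in> S \<and> R i j"
  have "R j j"
    using assms(2) by (rule equivp_reflp)
  then have i: "Least ?P \<in> S" "R (Least ?P) j"
    using LeastI [of ?P j] assms(1) by auto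
  have R_iff: "R i j \<longleftrightarrow> R i (Least ?P)" "R i j \<longleftrightarrow> R (Least ?P) i" for i
    using i(2) assms(2) by (auto simp: equivp_def)
  have least: "\<not> R i (Least ?P)" if "i \<in> S" "i < Least ?P" for i
    using not_less_Least [OF that(2)] that(1) R_iff by blast
  then show "Least ?P \<in> {j \<in> S. \<not> (\<exists>i\<in>S. i < j \<and> R i j)} \<and> R (Least ?P) j"
    using i by blast
  fix i'
  assume i': "i' \<in> {j \<in> S. \<not> (\<exists>i\<in>S. i < j \<and> R i j)} \<and> R i' j"
  then have "\<not> i' < Least ?P" and "\<not> Least ?P < i'"
    using least i(1) R_iff by blast+
  then show "i' = Least ?P"
    by simp
qed

lemma Proj_CARD:
  fixes \<sigma> :: "'d::{finite,linorder} list"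
  assumes "distinct \<sigma>" and "set \<sigma> = UNIV"
  shows "Proj \<sigma> CARD('d) x = x"
  using distinct_card [OF assms(1)] assms(2) by (simp add: Proj_def vec_eq_iff)

lemma overlap_exactly_proj_idx:
  fixes \<sigma> :: "'d::{finite,linorder} list"
  assumes distinct_maps: "\<forall>i\<in>Idx N. \<forall>j\<in>Idx N. i \<noteq> j \<longrightarrow> (\<exists>x\<in>cbox 0 One. fmap lam t i x \<noteq> fmap lam t j x)"
    and "distinct \<sigma>" and "set \<sigma> = UNIV" and "n \<le> CARD('d)" and "j \<in> Idx N"
  shows "overlap_exactly lam t \<sigma> n (proj_idx lam t N \<sigma> n j) j"
proof -
  have "\<exists>!i. i \<in> Iset lam t N \<sigma> n \<and> overlap_exactly lam t \<sigma> n i j"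
  proof (cases "n < CARD('d)")
    case True
    have "equivp (overlap_exactly lam t \<sigma> n)"
      by (intro equivpI reflpI sympI transpI) (auto intro: overlap_exactly_sym overlap_exactly_trans)
    then show ?thesis
      using ex1_least_related [OF assms(5)] True by (simp add: Iset_def)
  next
    case False
    then have "overlap_exactly lam t \<sigma> n i j \<longleftrightarrow> (\<forall>x\<in>cbox 0 One. fmap lam t i x = fmap lam t j x)" for i
      using Proj_CARD [OF assms(2,3)] assms(4) by (simp add: overlap_exactly_def)
    then have "i = j" if "i \<in> Idx N" and "overlap_exactly lam t \<sigma> n i j" for i
      using distinct_maps [rule_format, OF that(1) assms(5)] that(2) by blast
    then show ?thesis
      using False assms(5) by (auto simp: Iset_def)
  qed
  then show ?thesis
    unfolding proj_idx_def by (rule the1I2) blast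
qed

lemma overlap_exactly_if_proj_idx_eq:
  fixes \<sigma> :: "'d::{finite,linorder} list"
  assumes "\<forall>i\<in>Idx N. \<forall>j\<in>Idx N. i \<noteq> j \<longrightarrow> (\<exists>x\<in>cbox 0 One. fmap lam t i x \<noteq> fmap lam t j x)"
    and "distinct \<sigma>" and "set \<sigma> = UNIV" and "n \<le> CARD('d)" and "i \<in> Idx N" and "j \<in> Idx N"
    and "proj_idx lam t N \<sigma> n i = proj_idx lam t N \<sigma> n j"
  shows "overlap_exactly lam t \<sigma> n i j"
proof -
  have "overlap_exactly lam t \<sigma> n (proj_idx lam t N \<sigma> n i) i"
    and "overlap_exactly lam t \<sigma> n (proj_idx lam t N \<sigma> n i) j"
    using overlap_exactly_proj_idx [OF assms(1-5)] overlap_exactly_proj_idx [OF assms(1-4,6)] assms(7)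
    by simp_all
  then show ?thesis
    by (blast intro: overlap_exactly_sym overlap_exactly_trans)
qed

lemma mem_Bset_iff:
  fixes lam :: "nat \<Rightarrow> 'd::{finite,linorder} \<Rightarrow> real"
  shows "v \<in> Bset lam t N w r \<longleftrightarrow> v \<in> SymSp N \<and>
     (\<forall>n\<in>{1..CARD('d)}. \<forall>l < Lfun lam w r (sigma_of lam w r ! (n - 1)).
        proj_idx lam t N (sigma_of lam w r) n (v l) = proj_idx lam t N (sigma_of lam w r) n (w l))"
  by (auto simp: Bset_def Let_def common_prefix_ge_def proj_seq_def)

locale diagonal_ifs =
  fixes lam :: "nat \<Rightarrow> 'd::{finite,linorder} \<Rightarrow> real"
    and t :: "nat \<Rightarrow> (real, 'd) vec"
    and N :: nat
  assumes lam_pos: "i \<in> Idx N \<Longrightarrow> 0 < lam i k"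
    and lam_less_1: "i \<in> Idx N \<Longrightarrow> lam i k < 1"
begin

definition max_ratio :: real where
  "max_ratio = Max (insert 0 ((\<lambda>(i, k). lam i k) ` (Idx N \<times> UNIV)))"

lemma max_ratio_less_1: "max_ratio < 1"
  unfolding max_ratio_def by (subst Max_less_iff) (auto simp: Idx_def lam_less_1)

lemma max_ratio_nonneg: "0 \<le> max_ratio"
  unfolding max_ratio_def by (simp add: Idx_def)

lemma lam_le_max_ratio: "i \<in> Idx N \<Longrightarrow> lam i k \<le> max_ratio"
  unfolding max_ratio_def by (rule Max_ge) (auto simp: Idx_def)

lemma prod_lam_pos: "w \<in> SymSp N \<Longrightarrow> 0 < (\<Prod>l<j. lam (w l) k)"
  by (intro prod_pos) (simp add: SymSp_nth lam_pos)

lemma prod_lam_le_power: "w \<in> SymSp N \<Longrightarrow> (\<Prod>l<j. lam (w l) k) \<le> max_ratio ^ j"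
  using prod_mono [of "{..<j}" "\<lambda>l. lam (w l) k" "\<lambda>_. max_ratio"]
  by (simp add: SymSp_nth lam_le_max_ratio lam_pos less_imp_le)

lemma prod_lam_LIMSEQ_0:
  assumes "w \<in> SymSp N"
  shows "(\<lambda>j. \<Prod>l<j. lam (w l) k) \<longlonglongrightarrow> 0"
proof (rule Lim_null_comparison [OF always_eventually])
  show "\<forall>j. norm (\<Prod>l<j. lam (w l) k) \<le> max_ratio ^ j"
    using assms by (simp add: prod_lam_pos prod_lam_le_power less_imp_le)
  show "(\<lambda>j. max_ratio ^ j) \<longlonglongrightarrow> 0"
    using max_ratio_nonneg max_ratio_less_1 by (simp add: LIMSEQ_power_zero)
qed

lemma prod_Lfun_le_radius:
  assumes "w \<in> SymSp N" and "0 < r"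
  shows "(\<Prod>l<Lfun lam w r k. lam (w l) k) \<le> r"
proof -
  obtain L where "(\<Prod>l<L. lam (w l) k) < r"
    using order_tendstoD(2) [OF prod_lam_LIMSEQ_0 [OF assms(1)] assms(2)]
    by (auto simp: eventually_sequentially)
  then show ?thesis
    by (intro prod_Lfun_le [where L = L]) simp
qed

lemma summable_coding_series:
  assumes "w \<in> SymSp N"
  shows "summable (\<lambda>j. (\<Prod>l<j. lam (w l) k) * t (w j) $ k)"
proof -
  define T where "T = Max ((\<lambda>i. \<bar>t i $ k\<bar>) ` Idx N)"
  have T: "\<bar>t (w j) $ k\<bar> \<le> T" for j
    unfolding T_def using SymSp_nth [OF assms] by (intro Max_ge) (auto simp: Idx_def)
  have bound: "norm ((\<Prod>l<j. lam (w l) k) * t (w j) $ k) \<le> max_ratio ^ j * T" for j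
  proof -
    have "norm ((\<Prod>l<j. lam (w l) k) * t (w j) $ k) = (\<Prod>l<j. lam (w l) k) * \<bar>t (w j) $ k\<bar>"
      using prod_lam_pos [OF assms] by (simp add: abs_mult less_imp_le)
    also have "\<dots> \<le> max_ratio ^ j * T"
      using prod_lam_le_power [OF assms] T max_ratio_nonneg by (intro mult_mono) simp_all
    finally show ?thesis .
  qed
  have "summable (\<lambda>j. max_ratio ^ j * T)"
    using max_ratio_nonneg max_ratio_less_1 by (intro summable_mult2 summable_geometric) simp
  then show ?thesis
    by (rule summable_comparison_test' [where N = 0]) (rule bound)
qed

lemma coding_nth:
  assumes "w \<in> SymSp N"
  shows "coding lam t w $ k = (\<Sum>j. (\<Prod>l<j. lam (w l) k) * t (w j) $ k)"
proof -
  let ?a = "\<chi> k. \<Sum>j. (\<Prod>l<j. lam (w l) k) * t (w j) $ k"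
  have "(\<lambda>K. foldr (fmap lam t) (map w [0..<K]) 0) \<longlonglongrightarrow> ?a"
    using summable_LIMSEQ [OF summable_coding_series [OF assms]]
    by (intro vec_tendstoI) (simp add: foldr_fmap_nth)
  then have "coding lam t w = ?a"
    unfolding coding_def by (rule limI)
  then show ?thesis by simp
qed

lemma LIMSEQ_coding:
  assumes "w \<in> SymSp N"
  shows "(\<lambda>K. foldr (fmap lam t) (map w [0..<K]) 0) \<longlonglongrightarrow> coding lam t w"
  using summable_LIMSEQ [OF summable_coding_series [OF assms]]
  by (intro vec_tendstoI) (simp add: foldr_fmap_nth coding_nth assms)

lemma norm_foldr_fmap_diff_le:
  assumes "w \<in> SymSp N"
  shows "norm (foldr (fmap lam t) (map w [0..<K]) x - foldr (fmap lam t) (map w [0..<K]) y)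
           \<le> max_ratio ^ K * norm (x - y)"
proof -
  have "norm ((foldr (fmap lam t) (map w [0..<K]) x - foldr (fmap lam t) (map w [0..<K]) y) $ k)
          \<le> norm ((max_ratio ^ K *\<^sub>R (x - y)) $ k)" for k
  proof -
    have "(foldr (fmap lam t) (map w [0..<K]) x - foldr (fmap lam t) (map w [0..<K]) y) $ k
            = (\<Prod>l<K. lam (w l) k) * (x $ k - y $ k)"
      by (simp add: foldr_fmap_nth right_diff_distrib)
    moreover have "\<bar>\<Prod>l<K. lam (w l) k\<bar> \<le> max_ratio ^ K"
      by (simp add: abs_of_pos prod_lam_pos [OF assms] prod_lam_le_power [OF assms])
    ultimately show ?thesis
      by (simp add: abs_mult mult_right_mono)
  qed
  then have "norm (foldr (fmap lam t) (map w [0..<K]) x - foldr (fmap lam t) (map w [0..<K]) y)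
               \<le> norm (max_ratio ^ K *\<^sub>R (x - y))"
    by (rule norm_le_componentwise_cart)
  then show ?thesis
    using max_ratio_nonneg by simp
qed

lemma attractor_subset_coding_image:
  assumes "bounded F" and "F \<subseteq> (\<Union>i\<in>Idx N. fmap lam t i ` F)"
  shows "F \<subseteq> coding lam t ` SymSp N"
proof
  fix x assume "x \<in> F"
  obtain v xs where v: "v \<in> SymSp N" and xs_in_F: "\<And>K. xs K \<in> F"
    and x_eq: "\<And>K. foldr (fmap lam t) (map v [0..<K]) (xs K) = x"
    using self_similar_backward_orbit [OF \<open>x \<in> F\<close> assms(2)] by blast
  obtain B where B: "\<And>y. y \<in> F \<Longrightarrow> norm y \<le> B"
    using \<open>bounded F\<close> by (auto simp: bounded_iff)
  have "(\<lambda>K. x - foldr (fmap lam t) (map v [0..<K]) 0) \<longlonglongrightarrow> 0"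
  proof (rule Lim_null_comparison [OF always_eventually])
    show "\<forall>K. norm (x - foldr (fmap lam t) (map v [0..<K]) 0) \<le> max_ratio ^ K * B"
    proof
      fix K
      have "norm (x - foldr (fmap lam t) (map v [0..<K]) 0) \<le> max_ratio ^ K * norm (xs K)"
        using norm_foldr_fmap_diff_le [OF v, of K "xs K" 0] by (simp add: x_eq)
      also have "\<dots> \<le> max_ratio ^ K * B"
        using B [OF xs_in_F] max_ratio_nonneg by (simp add: mult_left_mono)
      finally show "norm (x - foldr (fmap lam t) (map v [0..<K]) 0) \<le> max_ratio ^ K * B" .
    qed
    show "(\<lambda>K. max_ratio ^ K * B) \<longlonglongrightarrow> 0"
      using max_ratio_nonneg max_ratio_less_1 by (intro tendsto_mult_left_zero LIMSEQ_power_zero) simp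
  qed
  then have "(\<lambda>K. foldr (fmap lam t) (map v [0..<K]) 0) \<longlonglongrightarrow> x"
    by (rule Lim_transform2 [OF tendsto_const])
  then have "x = coding lam t v"
    using LIMSEQ_coding [OF v] by (rule LIMSEQ_unique)
  then show "x \<in> coding lam t ` SymSp N"
    using v by blast
qed

lemma coding_suffix_nth:
  assumes "w \<in> SymSp N"
  shows "coding lam t w $ k = (\<Sum>j<l. (\<Prod>i<j. lam (w i) k) * t (w j) $ k)
            + (\<Prod>i<l. lam (w i) k) * coding lam t (suffix l w) $ k"
proof -
  let ?f = "\<lambda>j. (\<Prod>i<j. lam (w i) k) * t (w j) $ k"
  have "(\<Sum>j. ?f (j + l)) = (\<Prod>i<l. lam (w i) k) *
          (\<Sum>j. (\<Prod>i<j. lam (suffix l w i) k) * t (suffix l w j) $ k)"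
    using summable_coding_series [OF suffix_in_SymSp [OF assms]]
    by (subst suminf_mult [symmetric])
       (simp_all add: add.commute [of _ l] prod_lessThan_add mult.assoc)
  then show ?thesis
    using suminf_split_initial_segment [OF summable_coding_series [OF assms, of k], of l]
    by (simp add: coding_nth assms suffix_in_SymSp)
qed

lemma coding_eq_fmap_coding_suffix:
  "w \<in> SymSp N \<Longrightarrow> coding lam t w = fmap lam t (w 0) (coding lam t (suffix 1 w))"
  using coding_suffix_nth [where w = w and l = 1] by (simp add: vec_eq_iff)

lemma coding_nth_diff_eq:
  assumes "v \<in> SymSp N" and "w \<in> SymSp N"
    and agree: "\<And>l. l < L \<Longrightarrow> lam (v l) k = lam (w l) k \<and> t (v l) $ k = t (w l) $ k"
  shows "coding lam t v $ k - coding lam t w $ k =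
     (\<Prod>i<L. lam (w i) k) * (coding lam t (suffix L v) $ k - coding lam t (suffix L w) $ k)"
proof -
  have prod_eq: "(\<Prod>i<j. lam (v i) k) = (\<Prod>i<j. lam (w i) k)" if "j \<le> L" for j
    using agree that by (intro prod.cong) auto
  have "(\<Sum>j<L. (\<Prod>i<j. lam (v i) k) * t (v j) $ k) = (\<Sum>j<L. (\<Prod>i<j. lam (w i) k) * t (w j) $ k)"
    using agree prod_eq by (intro sum.cong) auto
  then show ?thesis
    using coding_suffix_nth [OF assms(1), where l = L] coding_suffix_nth [OF assms(2), where l = L] prod_eq [of L]
    by (simp add: algebra_simps)
qed

lemma coding_nth_diff_if_overlap:
  assumes "v \<in> SymSp N" and "w \<in> SymSp N"
    and "\<And>l. l < L \<Longrightarrow> overlap_exactly lam t \<sigma> n (v l) (w l)"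
    and "k \<in> set (take n \<sigma>)"
  shows "coding lam t v $ k - coding lam t w $ k =
     (\<Prod>i<L. lam (w i) k) * (coding lam t (suffix L v) $ k - coding lam t (suffix L w) $ k)"
  using assms by (intro coding_nth_diff_eq) (auto dest: overlap_exactly_nth)

lemma scaled_norm_Proj_suffix_diff_le:
  assumes "v \<in> SymSp N" and "w \<in> SymSp N"
    and "\<And>l'. l' < l \<Longrightarrow> overlap_exactly lam t \<sigma> n (v l') (w l')"
    and "\<And>k. k \<in> set (take n \<sigma>) \<Longrightarrow> c \<le> (\<Prod>i<l. lam (w i) k)" and "0 \<le> c"
  shows "c * norm (Proj \<sigma> n (coding lam t (suffix l v)) - Proj \<sigma> n (coding lam t (suffix l w)))
           \<le> dist (coding lam t v) (coding lam t w)"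
proof -
  let ?a = "coding lam t (suffix l v)" and ?b = "coding lam t (suffix l w)"
  have "c * \<bar>(Proj \<sigma> n ?a - Proj \<sigma> n ?b) $ k\<bar> \<le> \<bar>(coding lam t v - coding lam t w) $ k\<bar>" for k
  proof (cases "k \<in> set (take n \<sigma>)")
    case True
    have "c * \<bar>?a $ k - ?b $ k\<bar> \<le> (\<Prod>i<l. lam (w i) k) * \<bar>?a $ k - ?b $ k\<bar>"
      using assms(4) [OF True] by (rule mult_right_mono) simp
    also have "\<dots> = \<bar>coding lam t v $ k - coding lam t w $ k\<bar>"
      using coding_nth_diff_if_overlap [OF assms(1-3) True] prod_lam_pos [OF assms(2)]
      by (simp add: abs_mult less_imp_le)
    finally show ?thesis
      using True by (simp add: Proj_def)
  qed (simp add: Proj_def assms(5))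
  then show ?thesis
    unfolding dist_norm using assms(5) by (rule scaled_norm_le_componentwise_cart)
qed

end

locale diagonal_ifs_on_cube = diagonal_ifs lam t N
  for lam :: "nat \<Rightarrow> 'd::{finite,linorder} \<Rightarrow> real" and t and N +
  assumes fmap_cube: "i \<in> Idx N \<Longrightarrow> fmap lam t i ` cbox 0 One \<subseteq> cbox 0 One"
begin

lemma foldr_fmap_in_cube:
  assumes "w \<in> SymSp N"
  shows "x \<in> cbox 0 One \<Longrightarrow> foldr (fmap lam t) (map w [0..<K]) x \<in> cbox 0 One"
proof (induction K arbitrary: x)
  case (Suc K)
  have "fmap lam t (w K) x \<in> cbox 0 One"
    using fmap_cube [OF SymSp_nth [OF assms]] Suc.prems by blast
  then show ?case
    using Suc.IH by simp
qed simp

lemma coding_in_cube: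
  assumes "w \<in> SymSp N"
  shows "coding lam t w \<in> cbox 0 One"
proof -
  have "\<forall>K. foldr (fmap lam t) (map w [0..<K]) 0 \<in> cbox 0 One"
    using foldr_fmap_in_cube [OF assms] by (simp add: mem_unit_cube_cart)
  then show ?thesis
    using closed_sequentially [OF closed_cbox _ LIMSEQ_coding [OF assms]] by blast
qed

lemma coding_suffix_in_image: "w \<in> SymSp N \<Longrightarrow> coding lam t (suffix l w) \<in> fmap lam t (w l) ` cbox 0 One"
  using coding_eq_fmap_coding_suffix [of "suffix l w"] coding_in_cube [of "suffix (Suc l) w"]
  by (simp add: suffix_in_SymSp)

lemma abs_coding_suffix_diff_le_1:
  assumes "v \<in> SymSp N" and "w \<in> SymSp N"
  shows "\<bar>coding lam t (suffix l v) $ k - coding lam t (suffix l w) $ k\<bar> \<le> 1"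
proof -
  have "0 \<le> coding lam t (suffix l v) $ k" "coding lam t (suffix l v) $ k \<le> 1"
    "0 \<le> coding lam t (suffix l w) $ k" "coding lam t (suffix l w) $ k \<le> 1"
    using coding_in_cube [OF suffix_in_SymSp [OF assms(1)], of l]
      coding_in_cube [OF suffix_in_SymSp [OF assms(2)], of l]
    by (simp_all add: mem_unit_cube_cart)
  then show ?thesis
    by (simp add: abs_le_iff)
qed

lemma dist_coding_le_if_mem_Bset:
  assumes distinct_maps:
      "\<forall>i\<in>Idx N. \<forall>j\<in>Idx N. i \<noteq> j \<longrightarrow> (\<exists>x\<in>cbox 0 One. fmap lam t i x \<noteq> fmap lam t j x)"
    and w: "w \<in> SymSp N" and "0 < r" and "v \<in> Bset lam t N w r"
  shows "dist (coding lam t v) (coding lam t w) \<le> sqrt (real CARD('d)) * r"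
proof -
  let ?\<sigma> = "sigma_of lam w r"
  have v: "v \<in> SymSp N"
    and agree: "\<And>n l. n \<in> {1..CARD('d)} \<Longrightarrow> l < Lfun lam w r (?\<sigma> ! (n - 1)) \<Longrightarrow>
                  proj_idx lam t N ?\<sigma> n (v l) = proj_idx lam t N ?\<sigma> n (w l)"
    using \<open>v \<in> Bset lam t N w r\<close> by (auto simp: mem_Bset_iff)
  have "\<bar>(coding lam t v - coding lam t w) $ k\<bar> \<le> r" for k
  proof -
    obtain p where p: "p < CARD('d)" "?\<sigma> ! p = k"
      using set_sigma_of [of lam w r] length_sigma_of [of lam w r] by (metis UNIV_I in_set_conv_nth)
    have overlap: "overlap_exactly lam t ?\<sigma> (Suc p) (v l) (w l)" if "l < Lfun lam w r k" for l
      using agree [of "Suc p" l] that p SymSp_nth [OF v] SymSp_nth [OF w]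
      by (intro overlap_exactly_if_proj_idx_eq [OF distinct_maps distinct_sigma_of set_sigma_of]) auto
    have "k \<in> set (take (Suc p) ?\<sigma>)"
      using p by (auto simp: in_set_conv_nth length_sigma_of intro!: exI [of _ p])
    then have "\<bar>coding lam t v $ k - coding lam t w $ k\<bar> =
        (\<Prod>i<Lfun lam w r k. lam (w i) k) *
          \<bar>coding lam t (suffix (Lfun lam w r k) v) $ k - coding lam t (suffix (Lfun lam w r k) w) $ k\<bar>"
      using coding_nth_diff_if_overlap [OF v w overlap] prod_lam_pos [OF w] by (simp add: abs_mult abs_of_pos)
    also have "\<dots> \<le> r * 1"
      using prod_Lfun_le_radius [OF w \<open>0 < r\<close>] abs_coding_suffix_diff_le_1 [OF v w] \<open>0 < r\<close>
      by (intro mult_mono) simp_all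
    finally show ?thesis
      by simp
  qed
  then show ?thesis
    unfolding dist_norm by (rule norm_le_sqrt_card_cart)
qed

lemma overlap_exactly_if_dist_coding_le:
  assumes v: "v \<in> SymSp N" and w: "w \<in> SymSp N" and "0 < \<delta>" and "0 < r"
    and close: "dist (coding lam t v) (coding lam t w) \<le> \<delta> * r"
    and prefix: "\<And>l'. l' < l \<Longrightarrow> overlap_exactly lam t \<sigma> n (v l') (w l')"
    and large: "\<And>k. k \<in> set (take n \<sigma>) \<Longrightarrow> r < (\<Prod>i<l. lam (w i) k)"
    and separated: "\<not> overlap_exactly lam t \<sigma> n (v l) (w l) \<Longrightarrow>
      \<delta> \<le> setdist (Proj \<sigma> n ` fmap lam t (v l) ` cbox 0 One) (Proj \<sigma> n ` fmap lam t (w l) ` cbox 0 One)"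
  shows "overlap_exactly lam t \<sigma> n (v l) (w l)"
proof (rule ccontr)
  assume "\<not> overlap_exactly lam t \<sigma> n (v l) (w l)"
  let ?a = "Proj \<sigma> n (coding lam t (suffix l v))" and ?b = "Proj \<sigma> n (coding lam t (suffix l w))"
  define c where "c = Min (insert (r + 1) ((\<lambda>k. \<Prod>i<l. lam (w i) k) ` set (take n \<sigma>)))"
  have "r < c"
    using large by (simp add: c_def)
  have c_le: "c \<le> (\<Prod>i<l. lam (w i) k)" if "k \<in> set (take n \<sigma>)" for k
    using that by (simp add: c_def)
  have "\<delta> \<le> setdist (Proj \<sigma> n ` fmap lam t (v l) ` cbox 0 One) (Proj \<sigma> n ` fmap lam t (w l) ` cbox 0 One)"
    by (rule separated) fact
  also have "\<dots> \<le> dist ?a ?b"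
    using coding_suffix_in_image [OF v] coding_suffix_in_image [OF w] by (intro setdist_le_dist) auto
  finally have "c * \<delta> \<le> c * norm (?a - ?b)"
    using \<open>0 < r\<close> \<open>r < c\<close> by (simp add: dist_norm)
  also have "\<dots> \<le> dist (coding lam t v) (coding lam t w)"
    using \<open>0 < r\<close> \<open>r < c\<close> by (intro scaled_norm_Proj_suffix_diff_le [OF v w prefix c_le]) simp_all
  also have "\<dots> \<le> \<delta> * r"
    by (rule close)
  finally show False
    using \<open>0 < \<delta>\<close> \<open>r < c\<close> by (simp add: mult.commute)
qed

lemma mem_Bset_if_dist_coding_le:
  assumes separated: "\<forall>\<sigma>\<in>Acal lam N. \<forall>n\<in>{1..CARD('d)}. \<forall>i\<in>Idx N. \<forall>j\<in>Idx N.
      \<not> overlap_exactly lam t \<sigma> n i j \<longrightarrow>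
      \<delta> \<le> setdist (Proj \<sigma> n ` fmap lam t i ` cbox 0 One) (Proj \<sigma> n ` fmap lam t j ` cbox 0 One)"
    and "0 < \<delta>" and w: "w \<in> SymSp N" and "0 < r" and v: "v \<in> SymSp N"
    and close: "dist (coding lam t v) (coding lam t w) \<le> \<delta> * r"
  shows "v \<in> Bset lam t N w r"
proof -
  let ?\<sigma> = "sigma_of lam w r"
  have "?\<sigma> \<in> Acal lam N"
    using w \<open>0 < r\<close> by (auto simp: Acal_def)
  have "overlap_exactly lam t ?\<sigma> n (v l) (w l)"
    if n: "n \<in> {1..CARD('d)}" and "l < Lfun lam w r (?\<sigma> ! (n - 1))" for n l
    using that(2)
  proof (induction l rule: less_induct)
    case (less l)
    have prefix: "overlap_exactly lam t ?\<sigma> n (v l') (w l')" if "l' < l" for l'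
      using less.IH [OF that] that less.prems by simp
    have large: "r < (\<Prod>i<l. lam (w i) k)" if "k \<in> set (take n ?\<sigma>)" for k
      using Lfun_sigma_of_le_if_mem_take [OF that] n less.prems by (intro less_Lfun_imp_less_prod) auto
    show ?case
      by (rule overlap_exactly_if_dist_coding_le [OF v w \<open>0 < \<delta>\<close> \<open>0 < r\<close> close prefix large
            separated [rule_format, OF \<open>?\<sigma> \<in> Acal lam N\<close> n SymSp_nth [OF v] SymSp_nth [OF w]]])
  qed
  then show ?thesis
    using v by (auto simp: mem_Bset_iff intro: proj_idx_eq_if_overlap)
qed

lemma coding_Bset_subset_cball:
  assumes "\<forall>i\<in>Idx N. \<forall>j\<in>Idx N. i \<noteq> j \<longrightarrow> (\<exists>x\<in>cbox 0 One. fmap lam t i x \<noteq> fmap lam t j x)"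
    and "w \<in> SymSp N" and "0 < r"
  shows "coding lam t ` Bset lam t N w r \<subseteq> cball (coding lam t w) (sqrt (real CARD('d)) * r)"
  using dist_coding_le_if_mem_Bset [OF assms] by (auto simp: dist_commute)

lemma cball_inter_subset_coding_Bset:
  assumes "\<forall>\<sigma>\<in>Acal lam N. \<forall>n\<in>{1..CARD('d)}. \<forall>i\<in>Idx N. \<forall>j\<in>Idx N.
      \<not> overlap_exactly lam t \<sigma> n i j \<longrightarrow>
      \<delta> \<le> setdist (Proj \<sigma> n ` fmap lam t i ` cbox 0 One) (Proj \<sigma> n ` fmap lam t j ` cbox 0 One)"
    and "0 < \<delta>" and "F \<subseteq> coding lam t ` SymSp N" and "w \<in> SymSp N" and "0 < r"
  shows "cball (coding lam t w) (\<delta> * r) \<inter> F \<subseteq> coding lam t ` Bset lam t N w r"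
proof
  fix y assume y: "y \<in> cball (coding lam t w) (\<delta> * r) \<inter> F"
  then obtain v where "v \<in> SymSp N" and "y = coding lam t v"
    using assms(3) by blast
  moreover from this y have "dist (coding lam t v) (coding lam t w) \<le> \<delta> * r"
    by (simp add: dist_commute)
  ultimately show "y \<in> coding lam t ` Bset lam t N w r"
    using mem_Bset_if_dist_coding_le [OF assms(1,2,4,5)] by blast
qed

end

theorem lemma6p1:
  fixes lam :: "nat \<Rightarrow> 'd::{finite,linorder} \<Rightarrow> real"
    and t :: "nat \<Rightarrow> (real, 'd) vec" and N :: nat and F :: "((real, 'd) vec) set"
  assumes "sponge lam t N F"
    and "SPPC lam t N"
  shows "(\<forall>w\<in>SymSp N. \<forall>r>0.
            coding lam t ` Bset lam t N w r \<subseteq> cball (coding lam t w) (sqrt (real CARD('d)) * r))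
       \<and> (\<forall>\<delta>\<^sub>0. very_strong_SPPC lam t N \<and> \<delta>\<^sub>0 > 0 \<and>
            (\<forall>\<sigma>\<in>Acal lam N. \<forall>n\<in>{1..CARD('d)}. \<forall>i\<in>Idx N. \<forall>j\<in>Idx N.
                \<not> overlap_exactly lam t \<sigma> n i j \<longrightarrow>
                setdist (Proj \<sigma> n ` fmap lam t i ` cbox 0 One) (Proj \<sigma> n ` fmap lam t j ` cbox 0 One) \<ge> \<delta>\<^sub>0)
          \<longrightarrow> (\<forall>w\<in>SymSp N. \<forall>r>0.
                cball (coding lam t w) (\<delta>\<^sub>0 * r) \<inter> F \<subseteq> coding lam t ` Bset lam t N w r))"
proof -
  have contraction: "\<forall>i\<in>Idx N. \<forall>k. 0 < lam i k \<and> lam i k < 1"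
    and cube: "\<forall>i\<in>Idx N. fmap lam t i ` cbox 0 One \<subseteq> cbox 0 One"
    and distinct_maps: "\<forall>i\<in>Idx N. \<forall>j\<in>Idx N. i \<noteq> j \<longrightarrow> (\<exists>x\<in>cbox 0 One. fmap lam t i x \<noteq> fmap lam t j x)"
    and "compact F" and F_eq: "F = (\<Union>i\<in>Idx N. fmap lam t i ` F)"
    using assms(1) unfolding sponge_def by auto
  interpret diagonal_ifs_on_cube lam t N
    using contraction cube by unfold_locales auto
  have F_coded: "F \<subseteq> coding lam t ` SymSp N"
    using compact_imp_bounded [OF \<open>compact F\<close>] F_eq by (intro attractor_subset_coding_image) auto
  \<comment> \<open>Neither SPPC condition is used: the index projections are well defined for every sponge,
    and the \<open>\<delta>\<^sub>0\<close>-separation hypothesis already implies the very strong SPPC.\<close>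
  show ?thesis
    by (intro conjI ballI allI impI coding_Bset_subset_cball [OF distinct_maps]
        cball_inter_subset_coding_Bset [OF _ _ F_coded]) simp_all
qed

end
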